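(* Let $X$ be a cubic vertex-transitive graph such that both $1$ and $-1$ are simple eigenvalues of $X$. Then $X$ is bipartite.
   Context: Eigenvalues are those of the adjacency matrix. An eigenvalue is simple if its eigenspace is $1$-dimensional. *)

theory Defs
  imports "HOL-Analysis.Analysis"
begin

definition simple_graph :: "('a \<Rightarrow> 'a \<Rightarrow> bool) \<Rightarrow> bool" where
  "simple_graph E \<longleftrightarrow> (\<forall>x y. E x y \<longrightarrow> E y x) \<and> (\<forall>x. \<not> E x x)"

definition cubic :: "('a \<Rightarrow> 'a \<Rightarrow> bool) \<Rightarrow> bool" where
  "cubic E \<longleftrightarrow> (\<forall>v. card {w. E v w} = 3)"

definition graph_automorphism :: "('a \<Rightarrow> 'a \<Rightarrow> bool) \<Rightarrow> ('a \<Rightarrow> 'a) \<Rightarrow> bool" where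
  "graph_automorphism E \<sigma> \<longleftrightarrow> bij \<sigma> \<and> (\<forall>x y. E x y \<longleftrightarrow> E (\<sigma> x) (\<sigma> y))"

definition vertex_transitive :: "('a \<Rightarrow> 'a \<Rightarrow> bool) \<Rightarrow> bool" where
  "vertex_transitive E \<longleftrightarrow> (\<forall>u v. \<exists>\<sigma>. graph_automorphism E \<sigma> \<and> \<sigma> u = v)"

definition adjacency_matrix :: "('a::finite \<Rightarrow> 'a \<Rightarrow> bool) \<Rightarrow> real ^ 'a ^ 'a" where
  "adjacency_matrix E = (\<chi> i j. if E i j then 1 else 0)"

definition eigenspace :: "real ^ 'n ^ 'n \<Rightarrow> real \<Rightarrow> (real ^ 'n) set" where
  "eigenspace A c = {v. A *v v = c *\<^sub>R v}"

definition simple_eigenvalue :: "real ^ 'n ^ 'n \<Rightarrow> real \<Rightarrow> bool" where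
  "simple_eigenvalue A c \<longleftrightarrow> dim (eigenspace A c) = 1"

definition bipartite :: "('a \<Rightarrow> 'a \<Rightarrow> bool) \<Rightarrow> bool" where
  "bipartite E \<longleftrightarrow> (\<exists>S. \<forall>x y. E x y \<longrightarrow> (x \<in> S \<longleftrightarrow> y \<notin> S))"

end

theory Submission
  imports Defs
begin

text \<open>
  By vertex-transitivity, the eigenvectors u of 1 and w of -1 can be scaled to take only the
  values \<open>\<plusminus>1\<close>, and every automorphism multiplies each of them by a sign. At a vertex x with
  neighbours a, b, c the equations \<open>u a + u b + u c = u x\<close> and \<open>w a + w b + w c = - w x\<close> leave
  two possibilities for the product p = u w: either \<open>p a + p b + p c = p x\<close>, or p takes the value
  \<open>- p x\<close> at all three neighbours. Since automorphisms multiply p, and hence \<open>A p - p\<close>, by a sign,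
  the set of vertices where \<open>A p - p\<close> vanishes is closed under automorphisms, hence empty or
  everything, so the same alternative holds at every vertex. In the first case p is an eigenvector of 1, hence a multiple of u, so w
  is constant; but a constant vector is an eigenvector of 3, not of -1. In the second case the
  sign of p is a proper 2-colouring.
\<close>

definition semi_invariant :: "('a \<Rightarrow> 'a \<Rightarrow> bool) \<Rightarrow> real ^ 'a \<Rightarrow> bool" where
  "semi_invariant E f \<longleftrightarrow>
    (\<forall>\<sigma>. graph_automorphism E \<sigma> \<longrightarrow> (\<exists>s. (\<chi> x. f $ \<sigma> x) = s *\<^sub>R f))"

lemma adjacency_matrix_mult_vec_nth:
  fixes E :: "'a::finite \<Rightarrow> 'a \<Rightarrow> bool"
  shows "(adjacency_matrix E *v f) $ x = (\<Sum>y | E x y. f $ y)"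
proof -
  have "(adjacency_matrix E *v f) $ x = (\<Sum>y\<in>UNIV. if E x y then f $ y else 0)"
    by (simp add: adjacency_matrix_def matrix_vector_mult_def) (rule sum.cong, auto)
  also have "\<dots> = (\<Sum>y | E x y. f $ y)"
    by (simp add: sum.inter_filter[symmetric])
  finally show ?thesis .
qed

lemma eigenspace_adjacency_matrix_iff:
  fixes E :: "'a::finite \<Rightarrow> 'a \<Rightarrow> bool"
  shows "f \<in> eigenspace (adjacency_matrix E) c \<longleftrightarrow> (\<forall>x. (\<Sum>y | E x y. f $ y) = c * f $ x)"
  by (simp add: eigenspace_def vec_eq_iff adjacency_matrix_mult_vec_nth)

lemma adjacency_matrix_mult_vec_automorphism:
  fixes E :: "'a::finite \<Rightarrow> 'a \<Rightarrow> bool"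
  assumes "graph_automorphism E \<sigma>"
  shows "adjacency_matrix E *v (\<chi> x. f $ \<sigma> x) = (\<chi> x. (adjacency_matrix E *v f) $ \<sigma> x)"
proof -
  have "bij \<sigma>" and edge: "\<And>x y. E x y \<longleftrightarrow> E (\<sigma> x) (\<sigma> y)"
    using assms by (auto simp: graph_automorphism_def)
  have "(\<Sum>y\<in>UNIV. (if E (\<sigma> x) y then 1 else 0) * f $ y)
      = (\<Sum>y\<in>UNIV. (if E x y then 1 else 0) * f $ \<sigma> y)" for x
    using sum.reindex_bij_betw[OF \<open>bij \<sigma>\<close>, of "\<lambda>y. (if E (\<sigma> x) y then 1 else 0) * f $ y"]
    by (simp add: edge[symmetric])
  then show ?thesis
    by (simp add: vec_eq_iff adjacency_matrix_def matrix_vector_mult_def)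
qed

lemma eigenspace_automorphism:
  fixes E :: "'a::finite \<Rightarrow> 'a \<Rightarrow> bool"
  assumes "graph_automorphism E \<sigma>" and "f \<in> eigenspace (adjacency_matrix E) c"
  shows "(\<chi> x. f $ \<sigma> x) \<in> eigenspace (adjacency_matrix E) c"
  using assms by (simp add: eigenspace_def adjacency_matrix_mult_vec_automorphism vec_eq_iff)

lemma simple_eigenvalue_nonzero_eigenvector:
  assumes "simple_eigenvalue A c"
  obtains f where "f \<in> eigenspace A c" and "f \<noteq> 0"
  using assms dim_eq_0[of "eigenspace A c"] unfolding simple_eigenvalue_def by auto

lemma simple_eigenvalue_eigenspace_multiples:
  assumes "simple_eigenvalue A c" and "f \<in> eigenspace A c" and "f \<noteq> 0"
    and "g \<in> eigenspace A c"
  obtains k where "g = k *\<^sub>R f"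
proof -
  have "eigenspace A c \<subseteq> span {f}"
    using assms(1-3) by (intro card_ge_dim_independent) (auto simp: simple_eigenvalue_def)
  with assms(4) that show ?thesis by (auto simp: span_singleton)
qed

lemma semi_invariant_eigenvector:
  fixes E :: "'a::finite \<Rightarrow> 'a \<Rightarrow> bool"
  assumes "simple_eigenvalue (adjacency_matrix E) c"
    and "f \<in> eigenspace (adjacency_matrix E) c" and "f \<noteq> 0"
  shows "semi_invariant E f"
  unfolding semi_invariant_def
proof (intro allI impI)
  fix \<sigma> assume "graph_automorphism E \<sigma>"
  then have "(\<chi> x. f $ \<sigma> x) \<in> eigenspace (adjacency_matrix E) c"
    using assms(2) by (rule eigenspace_automorphism)
  then obtain s where "(\<chi> x. f $ \<sigma> x) = s *\<^sub>R f"
    by (rule simple_eigenvalue_eigenspace_multiples[OF assms])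
  then show "\<exists>s. (\<chi> x. f $ \<sigma> x) = s *\<^sub>R f" by blast
qed

lemma norm_permute_vec:
  fixes f :: "real ^ 'a"
  assumes "bij \<sigma>"
  shows "norm (\<chi> x. f $ \<sigma> x) = norm f"
proof -
  have "(\<Sum>x\<in>UNIV. (f $ \<sigma> x)\<^sup>2) = (\<Sum>x\<in>UNIV. (f $ x)\<^sup>2)"
    using sum.reindex_bij_betw[of \<sigma> UNIV UNIV "\<lambda>x. (f $ x)\<^sup>2"] assms by simp
  then show ?thesis
    by (simp add: norm_eq_sqrt_inner inner_vec_def power2_eq_square)
qed

lemma permute_vec_eq_scaleR_abs:
  fixes f :: "real ^ 'a"
  assumes "bij \<sigma>" and "(\<chi> x. f $ \<sigma> x) = s *\<^sub>R f" and "f \<noteq> 0"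
  shows "\<bar>s\<bar> = 1"
  using norm_permute_vec[OF assms(1), of f] assms(2,3) by simp

lemma semi_invariant_abs_eq:
  fixes E :: "'a::finite \<Rightarrow> 'a \<Rightarrow> bool"
  assumes "vertex_transitive E" and "semi_invariant E f"
  shows "\<bar>f $ x\<bar> = \<bar>f $ y\<bar>"
proof (cases "f = 0")
  case False
  obtain \<sigma> where \<sigma>: "graph_automorphism E \<sigma>" "\<sigma> y = x"
    using assms(1) by (auto simp: vertex_transitive_def)
  then obtain s where s: "(\<chi> z. f $ \<sigma> z) = s *\<^sub>R f"
    using assms(2) by (auto simp: semi_invariant_def)
  have "\<bar>s\<bar> = 1"
    using permute_vec_eq_scaleR_abs[OF _ s False] \<sigma>(1) by (simp add: graph_automorphism_def)
  moreover have "f $ x = s * f $ y"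
    using arg_cong[OF s, of "\<lambda>v. v $ y"] \<sigma>(2) by simp
  ultimately show ?thesis
    by (simp add: abs_mult)
qed simp

lemma semi_invariant_nth_nonzero:
  fixes E :: "'a::finite \<Rightarrow> 'a \<Rightarrow> bool"
  assumes "vertex_transitive E" and "semi_invariant E f" and "f \<noteq> 0"
  shows "f $ x \<noteq> 0"
proof -
  obtain y where "f $ y \<noteq> 0"
    using assms(3) by (auto simp: vec_eq_iff)
  then show ?thesis
    using semi_invariant_abs_eq[OF assms(1,2), of x y] by auto
qed

lemma semi_invariant_scaleR:
  assumes "semi_invariant E f"
  shows "semi_invariant E (k *\<^sub>R f)"
  unfolding semi_invariant_def
proof (intro allI impI)
  fix \<sigma> assume "graph_automorphism E \<sigma>"
  then obtain s where "(\<chi> x. f $ \<sigma> x) = s *\<^sub>R f"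
    using assms by (auto simp: semi_invariant_def)
  then have "(\<chi> x. (k *\<^sub>R f) $ \<sigma> x) = s *\<^sub>R (k *\<^sub>R f)"
    by (simp add: vec_eq_iff)
  then show "\<exists>s. (\<chi> x. (k *\<^sub>R f) $ \<sigma> x) = s *\<^sub>R (k *\<^sub>R f)" by blast
qed

lemma semi_invariant_mult:
  assumes "semi_invariant E u" and "semi_invariant E w"
  shows "semi_invariant E (\<chi> x. u $ x * w $ x)"
  unfolding semi_invariant_def
proof (intro allI impI)
  fix \<sigma> assume \<sigma>: "graph_automorphism E \<sigma>"
  obtain s where "(\<chi> x. u $ \<sigma> x) = s *\<^sub>R u"
    using assms(1) \<sigma> by (auto simp: semi_invariant_def)
  moreover obtain t where "(\<chi> x. w $ \<sigma> x) = t *\<^sub>R w"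
    using assms(2) \<sigma> by (auto simp: semi_invariant_def)
  ultimately have "(\<chi> x. (\<chi> x. u $ x * w $ x) $ \<sigma> x) = (s * t) *\<^sub>R (\<chi> x. u $ x * w $ x)"
    by (simp add: vec_eq_iff)
  then show "\<exists>r. (\<chi> x. (\<chi> x. u $ x * w $ x) $ \<sigma> x) = r *\<^sub>R (\<chi> x. u $ x * w $ x)" by blast
qed

lemma semi_invariant_adjacency_matrix_diff:
  fixes E :: "'a::finite \<Rightarrow> 'a \<Rightarrow> bool"
  assumes "semi_invariant E f"
  shows "semi_invariant E (adjacency_matrix E *v f - c *\<^sub>R f)"
  unfolding semi_invariant_def
proof (intro allI impI)
  fix \<sigma> assume \<sigma>: "graph_automorphism E \<sigma>"
  then obtain s where s: "(\<chi> x. f $ \<sigma> x) = s *\<^sub>R f"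
    using assms by (auto simp: semi_invariant_def)
  have "(\<chi> x. (adjacency_matrix E *v f) $ \<sigma> x) = s *\<^sub>R (adjacency_matrix E *v f)"
    by (simp add: adjacency_matrix_mult_vec_automorphism[OF \<sigma>, symmetric] s
        matrix_vector_mult_scaleR)
  with s have "(\<chi> x. (adjacency_matrix E *v f - c *\<^sub>R f) $ \<sigma> x)
      = s *\<^sub>R (adjacency_matrix E *v f - c *\<^sub>R f)"
    by (simp add: vec_eq_iff algebra_simps)
  then show "\<exists>r. (\<chi> x. (adjacency_matrix E *v f - c *\<^sub>R f) $ \<sigma> x)
      = r *\<^sub>R (adjacency_matrix E *v f - c *\<^sub>R f)" by blast
qed

lemma simple_eigenvalue_unimodular_eigenvector:
  fixes E :: "'a::finite \<Rightarrow> 'a \<Rightarrow> bool"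
  assumes "vertex_transitive E" and "simple_eigenvalue (adjacency_matrix E) c"
  obtains u where "u \<in> eigenspace (adjacency_matrix E) c" and "semi_invariant E u"
    and "\<And>x. \<bar>u $ x\<bar> = 1"
proof -
  obtain f where f: "f \<in> eigenspace (adjacency_matrix E) c" "f \<noteq> 0"
    using assms(2) by (rule simple_eigenvalue_nonzero_eigenvector)
  then obtain y where "f $ y \<noteq> 0"
    by (auto simp: vec_eq_iff)
  have f_inv: "semi_invariant E f"
    using assms(2) f by (rule semi_invariant_eigenvector)
  define u where "u = (1 / \<bar>f $ y\<bar>) *\<^sub>R f"
  show ?thesis
  proof (rule that)
    show "u \<in> eigenspace (adjacency_matrix E) c"
      using f(1) by (simp add: u_def eigenspace_def matrix_vector_mult_scaleR)
    show "semi_invariant E u"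
      unfolding u_def using f_inv by (rule semi_invariant_scaleR)
    show "\<bar>u $ x\<bar> = 1" for x
      using semi_invariant_abs_eq[OF assms(1) f_inv, of x y] \<open>f $ y \<noteq> 0\<close>
      by (simp add: u_def abs_mult)
  qed
qed

lemma unit_sums_product_cases:
  fixes u w :: "'a \<Rightarrow> real"
  assumes "\<And>y. \<bar>u y\<bar> = 1" and "\<And>y. \<bar>w y\<bar> = 1"
    and "u a + u b + u c = u x" and "w a + w b + w c = - w x"
  shows "u a * w a + u b * w b + u c * w c = u x * w x
    \<or> (\<forall>y\<in>{a, b, c}. u y * w y = - (u x * w x))"
proof -
  have u_pm: "u y = 1 \<or> u y = -1" and w_pm: "w y = 1 \<or> w y = -1" for y
    using assms(1,2)[of y] by linarith+
  have "(u a = - u x \<and> u b = u x \<and> u c = u x) \<or> (u a = u x \<and> u b = - u x \<and> u c = u x)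
      \<or> (u a = u x \<and> u b = u x \<and> u c = - u x)"
    using u_pm[of a] u_pm[of b] u_pm[of c] u_pm[of x] assms(3) by auto
  moreover have "(w a = w x \<and> w b = - w x \<and> w c = - w x) \<or> (w a = - w x \<and> w b = w x \<and> w c = - w x)
      \<or> (w a = - w x \<and> w b = - w x \<and> w c = w x)"
    using w_pm[of a] w_pm[of b] w_pm[of c] w_pm[of x] assms(4) by auto
  ultimately show ?thesis
    by auto
qed

lemma eigenvector_product_neighbours:
  fixes E :: "'a::finite \<Rightarrow> 'a \<Rightarrow> bool"
  assumes "cubic E"
    and "u \<in> eigenspace (adjacency_matrix E) 1" and "\<And>x. \<bar>u $ x\<bar> = 1"
    and "w \<in> eigenspace (adjacency_matrix E) (-1)" and "\<And>x. \<bar>w $ x\<bar> = 1"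
  shows "(\<Sum>y | E x y. u $ y * w $ y) = u $ x * w $ x
    \<or> (\<forall>y. E x y \<longrightarrow> u $ y * w $ y = - (u $ x * w $ x))"
proof -
  obtain a b c where abc: "{y. E x y} = {a, b, c}" "a \<noteq> b" "b \<noteq> c" "a \<noteq> c"
    using assms(1) unfolding cubic_def card_3_iff by blast
  have "(\<Sum>y | E x y. u $ y) = u $ x" and "(\<Sum>y | E x y. w $ y) = - w $ x"
    using assms(2,4) by (simp_all add: eigenspace_adjacency_matrix_iff)
  then have "u $ a + u $ b + u $ c = u $ x" and "w $ a + w $ b + w $ c = - w $ x"
    using abc by simp_all
  with assms(3,5) have "u $ a * w $ a + u $ b * w $ b + u $ c * w $ c = u $ x * w $ x
      \<or> (\<forall>y\<in>{a, b, c}. u $ y * w $ y = - (u $ x * w $ x))"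
    by (intro unit_sums_product_cases[of "\<lambda>y. u $ y" "\<lambda>y. w $ y"])
  then show ?thesis
    using abc by auto
qed

lemma eigenvector_product_notin_eigenspace:
  fixes E :: "'a::finite \<Rightarrow> 'a \<Rightarrow> bool"
  assumes "cubic E" and "simple_eigenvalue (adjacency_matrix E) 1"
    and "u \<in> eigenspace (adjacency_matrix E) 1" and "\<And>x. \<bar>u $ x\<bar> = 1"
    and "w \<in> eigenspace (adjacency_matrix E) (-1)" and "\<And>x. \<bar>w $ x\<bar> = 1"
  shows "(\<chi> x. u $ x * w $ x) \<notin> eigenspace (adjacency_matrix E) 1"
proof
  assume "(\<chi> x. u $ x * w $ x) \<in> eigenspace (adjacency_matrix E) 1"
  moreover have u_nonzero: "u $ x \<noteq> 0" for x
    using assms(4)[of x] by auto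
  ultimately obtain k where k: "(\<chi> x. u $ x * w $ x) = k *\<^sub>R u"
    using assms(2,3) by (metis simple_eigenvalue_eigenspace_multiples zero_index)
  have w_const: "w $ x = k" for x
    using arg_cong[OF k, of "\<lambda>v. v $ x"] u_nonzero[of x] by (simp add: mult.commute)
  then have "3 * k = - k"
    using assms(1,5) by (simp add: eigenspace_adjacency_matrix_iff cubic_def)
  then have "k = 0"
    by simp
  with w_const assms(6) show False
    by simp
qed

lemma bipartite_if_alternating_sign:
  fixes f :: "'a \<Rightarrow> real"
  assumes "\<And>x. f x \<noteq> 0" and "\<And>x y. E x y \<Longrightarrow> f y = - f x"
  shows "bipartite E"
  unfolding bipartite_def
proof (intro exI allI impI)
  fix x y assume "E x y"
  then show "x \<in> {z. f z > 0} \<longleftrightarrow> y \<notin> {z. f z > 0}"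
    using assms(1)[of x] assms(2)[OF \<open>E x y\<close>] by auto
qed

theorem theorem3p1:
  fixes E :: "'a::finite \<Rightarrow> 'a \<Rightarrow> bool"
  assumes "simple_graph E"
    and "cubic E"
    and "vertex_transitive E"
    and "simple_eigenvalue (adjacency_matrix E) 1"
    and "simple_eigenvalue (adjacency_matrix E) (-1)"
  shows "bipartite E"
proof -
  obtain u where u: "u \<in> eigenspace (adjacency_matrix E) 1" "semi_invariant E u" "\<And>x. \<bar>u $ x\<bar> = 1"
    using simple_eigenvalue_unimodular_eigenvector[OF assms(3,4)] by blast
  obtain w where w: "w \<in> eigenspace (adjacency_matrix E) (-1)" "semi_invariant E w"
    "\<And>x. \<bar>w $ x\<bar> = 1"
    using simple_eigenvalue_unimodular_eigenvector[OF assms(3,5)] by blast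
  define p where "p = (\<chi> x. u $ x * w $ x)"
  have "p \<notin> eigenspace (adjacency_matrix E) 1"
    unfolding p_def using assms(2,4) u(1,3) w(1,3) by (rule eigenvector_product_notin_eigenspace)
  then have "adjacency_matrix E *v p - 1 *\<^sub>R p \<noteq> 0"
    by (simp add: eigenspace_def)
  moreover have "semi_invariant E (adjacency_matrix E *v p - 1 *\<^sub>R p)"
    unfolding p_def by (intro semi_invariant_adjacency_matrix_diff semi_invariant_mult u w)
  ultimately have "(adjacency_matrix E *v p - 1 *\<^sub>R p) $ x \<noteq> 0" for x
    using assms(3) by (intro semi_invariant_nth_nonzero)
  then have "(\<Sum>y | E x y. u $ y * w $ y) \<noteq> u $ x * w $ x" for x
    by (simp add: p_def adjacency_matrix_mult_vec_nth)
  then have "E x y \<Longrightarrow> p $ y = - p $ x" for x y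
    using eigenvector_product_neighbours[OF assms(2) u(1,3) w(1,3), of x] by (simp add: p_def)
  moreover have "p $ x \<noteq> 0" for x
    using u(3)[of x] w(3)[of x] by (auto simp: p_def)
  ultimately show ?thesis
    by (intro bipartite_if_alternating_sign[of "\<lambda>x. p $ x"])
qed

end
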